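(* Let $(\mathcal I,\mathcal O,\Delta)$ be a colorless task, $\mathcal C\subseteq\mathcal P_n(\mathcal I)$ a condition and $\mathcal H$ a core-dependent adversary on $\mathcal C$. Then for every $k\in\mathbb N$, the task is solvable on $\mathcal H_k$ if and only if it is solvable on $\mathcal H_0$.
   Context: Fix $n\ge 0$, processes $\Pi_n=\{0,\dots,n\}$. $ImS_n$ is the set of directed graphs $G$ on $\Pi_n$ containing all self-loops such that in-neighbourhoods $In_G(a)=\{b:(b,a)\in A(G)\}$ are totally ordered by inclusion and $(a,b),(b,c)\in A(G)\Rightarrow(a,c)\in A(G)$; $IIS_n=ImS_n^\omega$. In an execution $\iota.w$, $w=G_1G_2\cdots$, processes start with inputs from $\iota$, and in round $r$ process $q$ receives the state of $p$ iff $(p,q)\in A(G_r)$, then updates its state. A colorless task $(\mathcal I,\mathcal O,\Delta)$: abstract simplicial complexes $\mathcal I,\mathcal O$ and monotone carrier map $\Delta:\mathcal I\to2^{\mathcal O}$. $\mathcal P_n(\mathcal I)$: chromatic complex with vertices $\Pi_n\times V(\mathcal I)$, $\{(i_0,u_0),\dots,(i_d,u_d)\}$ (distinct $i_j$) a simplex iff $\{u_0,\dots,u_d\}\in\mathcal I$; $GIV$ forgets colors. The task is solvable on $\mathcal A\subseteq\mathcal P_n(\mathcal I)\times IIS_n$ if some algorithm makes, in every $\iota.w\in\mathcal A$, each process of $\iota$ decide a vertex of $\mathcal O$ after finitely many rounds with the decided set a simplex of $\Delta(GIV(\iota))$. For $w\in IIS_n$, $Q(w)$ is the set of processes heard by every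 process in infinitely many rounds. A core-dependent adversary $\mathcal H$ on a condition $\mathcal C\subseteq\mathcal P_n(\mathcal I)$ is given by, for each $\iota\in\mathcal C$, an inclusion-closed collection $P_\iota$ of subsets of $\Pi_n$: $\mathcal H=\{\iota.w:\iota\in\mathcal C,\ w\in IIS_n,\ \Pi_n\setminus Q(w)\in P_\iota\}$. For $k\in\mathbb N$, $\mathcal H_k$ is the set of $\iota.w\in\mathcal H$ such that for all $p\notin Q(w)$, $q\in Q(w)$ and all rounds $r>k$, $(p,q)\notin A(G_r)$. *)

theory Defs
  imports Main
begin

type_synonym graph = "(nat \<times> nat) set"

definition procs :: "nat \<Rightarrow> nat set" where
  "procs n = {0..n}"

definition In_G :: "graph \<Rightarrow> nat \<Rightarrow> nat set" where
  "In_G G a = {b. (b, a) \<in> G}"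

definition ImS :: "nat \<Rightarrow> graph set" where
  "ImS n = {G. G \<subseteq> procs n \<times> procs n
              \<and> (\<forall>a\<in>procs n. (a, a) \<in> G)
              \<and> (\<forall>a\<in>procs n. \<forall>b\<in>procs n. In_G G a \<subseteq> In_G G b \<or> In_G G b \<subseteq> In_G G a)
              \<and> (\<forall>a b c. (a, b) \<in> G \<longrightarrow> (b, c) \<in> G \<longrightarrow> (a, c) \<in> G)}"

text \<open>IIS_n = ImS_n^omega. A communication sequence w = G_1 G_2 ... is represented
  by a function w :: nat => graph with G_(r+1) = w r (round r+1 uses w r).\<close>
definition IIS :: "nat \<Rightarrow> (nat \<Rightarrow> graph) set" where
  "IIS n = {w. \<forall>r. w r \<in> ImS n}"

definition simplicial_complex :: "'a set set \<Rightarrow> bool" where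
  "simplicial_complex K \<longleftrightarrow>
     (\<forall>\<sigma>\<in>K. finite \<sigma> \<and> \<sigma> \<noteq> {}) \<and>
     (\<forall>\<sigma>\<in>K. \<forall>\<tau>. \<tau> \<subseteq> \<sigma> \<and> \<tau> \<noteq> {} \<longrightarrow> \<tau> \<in> K)"

definition carrier_map :: "'a set set \<Rightarrow> 'b set set \<Rightarrow> ('a set \<Rightarrow> 'b set set) \<Rightarrow> bool" where
  "carrier_map I Out \<Delta> \<longleftrightarrow>
     (\<forall>\<sigma>\<in>I. \<Delta> \<sigma> \<subseteq> Out \<and> simplicial_complex (\<Delta> \<sigma>)) \<and>
     (\<forall>\<sigma>\<in>I. \<forall>\<tau>\<in>I. \<sigma> \<subseteq> \<tau> \<longrightarrow> \<Delta> \<sigma> \<subseteq> \<Delta> \<tau>)"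

definition colorless_task :: "'a set set \<Rightarrow> 'b set set \<Rightarrow> ('a set \<Rightarrow> 'b set set) \<Rightarrow> bool" where
  "colorless_task I Out \<Delta> \<longleftrightarrow> simplicial_complex I \<and> simplicial_complex Out \<and> carrier_map I Out \<Delta>"

definition Pn :: "nat \<Rightarrow> 'a set set \<Rightarrow> (nat \<times> 'a) set set" where
  "Pn n I = {\<sigma>. finite \<sigma> \<and> \<sigma> \<noteq> {} \<and> fst ` \<sigma> \<subseteq> procs n \<and> inj_on fst \<sigma> \<and> snd ` \<sigma> \<in> I}"

definition GIV :: "(nat \<times> 'a) set \<Rightarrow> 'a set" where
  "GIV \<iota> = snd ` \<iota>"

definition input :: "(nat \<times> 'a) set \<Rightarrow> nat \<Rightarrow> 'a option" where
  "input \<iota> p = (if \<exists>u. (p, u) \<in> \<iota> then Some (THE u. (p, u) \<in> \<iota>) else None)"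

datatype 'a view = VInit nat "'a option" | VStep nat "(nat \<times> 'a view) list"

fun fi_view :: "nat \<Rightarrow> (nat \<times> 'a) set \<Rightarrow> (nat \<Rightarrow> graph) \<Rightarrow> nat \<Rightarrow> nat \<Rightarrow> 'a view" where
  "fi_view n \<iota> w p 0 = VInit p (input \<iota> p)"
| "fi_view n \<iota> w p (Suc r) =
     VStep p (map (\<lambda>q. (q, fi_view n \<iota> w q r)) (filter (\<lambda>q. (q, p) \<in> w r) [0..<Suc n]))"

text \<open>An algorithm is (w.l.o.g.) a full-information protocol with decision function
  \<delta>; a process decides irrevocably at the first round where \<delta> yields a value.\<close>
definition decision :: "nat \<Rightarrow> ('a view \<Rightarrow> 'b option) \<Rightarrow> (nat \<times> 'a) set \<Rightarrow> (nat \<Rightarrow> graph) \<Rightarrow> nat \<Rightarrow> 'b" where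
  "decision n \<delta> \<iota> w p = the (\<delta> (fi_view n \<iota> w p (LEAST r. \<delta> (fi_view n \<iota> w p r) \<noteq> None)))"

definition solvable ::
  "nat \<Rightarrow> ('a set \<Rightarrow> 'b set set) \<Rightarrow> ((nat \<times> 'a) set \<times> (nat \<Rightarrow> graph)) set \<Rightarrow> bool" where
  "solvable n \<Delta> A \<longleftrightarrow>
     (\<exists>\<delta> :: 'a view \<Rightarrow> 'b option. \<forall>(\<iota>, w)\<in>A.
        (\<forall>p\<in>fst ` \<iota>. \<exists>r. \<delta> (fi_view n \<iota> w p r) \<noteq> None) \<and>
        (decision n \<delta> \<iota> w) ` (fst ` \<iota>) \<in> \<Delta> (GIV \<iota>))"

definition Qset :: "nat \<Rightarrow> (nat \<Rightarrow> graph) \<Rightarrow> nat set" where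
  "Qset n w = {p\<in>procs n. \<forall>q\<in>procs n. \<exists>\<^sub>\<infinity>r. (p, q) \<in> w r}"

definition core_dependent :: "nat \<Rightarrow> (nat \<times> 'a) set set \<Rightarrow> ((nat \<times> 'a) set \<Rightarrow> nat set set) \<Rightarrow> bool" where
  "core_dependent n C P \<longleftrightarrow>
     (\<forall>\<iota>\<in>C. P \<iota> \<subseteq> Pow (procs n) \<and> (\<forall>S\<in>P \<iota>. \<forall>T. T \<subseteq> S \<longrightarrow> T \<in> P \<iota>))"

definition adversary :: "nat \<Rightarrow> (nat \<times> 'a) set set \<Rightarrow> ((nat \<times> 'a) set \<Rightarrow> nat set set)
    \<Rightarrow> ((nat \<times> 'a) set \<times> (nat \<Rightarrow> graph)) set" where
  "adversary n C P = {(\<iota>, w). \<iota> \<in> C \<and> w \<in> IIS n \<and> procs n - Qset n w \<in> P \<iota>}"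

text \<open>H_k: after round k no process outside Q(w) is heard by a process in Q(w).
  Round r (r \<ge> 1) uses graph w (r - 1).\<close>
definition adversary_k :: "nat \<Rightarrow> (nat \<times> 'a) set set \<Rightarrow> ((nat \<times> 'a) set \<Rightarrow> nat set set)
    \<Rightarrow> nat \<Rightarrow> ((nat \<times> 'a) set \<times> (nat \<Rightarrow> graph)) set" where
  "adversary_k n C P k = {(\<iota>, w) \<in> adversary n C P.
      \<forall>p\<in>procs n - Qset n w. \<forall>q\<in>Qset n w. \<forall>r. k < r \<longrightarrow> (p, q) \<notin> w (r - 1)}"

end

theory Submission
  imports Defs
begin

text \<open>Every execution in \<open>H\<^sub>0\<close> lies in \<open>H\<^sub>k\<close>, so one direction is trivial. Conversely, if an
  execution lies in \<open>H\<^sub>k\<close>, then its suffix after round \<open>k\<close> is an execution of \<open>H\<^sub>0\<close> on the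
  same input: dropping finitely many rounds changes neither \<open>Q(w)\<close> nor the condition imposed
  by \<open>P\<close>. A process can therefore wait for \<open>k\<close> rounds and then run the \<open>H\<^sub>0\<close>-algorithm on
  its view with the first \<open>k\<close> rounds erased; that view is exactly its view in the suffix
  execution, provided the erased view still remembers the input, which the process can recover
  because it always hears itself.\<close>

fun view_owner :: "'a view \<Rightarrow> nat" where
  "view_owner (VInit p x) = p"
| "view_owner (VStep p l) = p"

fun own_input :: "nat \<Rightarrow> 'a view \<Rightarrow> 'a option" where
  "own_input m (VInit p x) = x"
| "own_input 0 (VStep p l) = None"
| "own_input (Suc m) (VStep p l) = (case map_of l p of Some v \<Rightarrow> own_input m v | None \<Rightarrow> None)"

text \<open>Full-information views always list their owner, so the depth can be read off any entry.\<close>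
fun view_depth :: "'a view \<Rightarrow> nat" where
  "view_depth (VInit p x) = 0"
| "view_depth (VStep p []) = 1"
| "view_depth (VStep p ((q, v) # l)) = Suc (view_depth v)"

text \<open>\<open>drop_rounds k r v\<close> turns a view of depth \<open>r + k\<close> into the view of depth \<open>r\<close> in which the
  first \<open>k\<close> rounds never happened.\<close>
fun drop_rounds :: "nat \<Rightarrow> nat \<Rightarrow> 'a view \<Rightarrow> 'a view" where
  "drop_rounds k 0 v = VInit (view_owner v) (own_input k v)"
| "drop_rounds k (Suc r) (VInit p x) = VInit p x"
| "drop_rounds k (Suc r) (VStep p l) = VStep p (map (\<lambda>(q, v). (q, drop_rounds k r v)) l)"

definition delay :: "nat \<Rightarrow> ('a view \<Rightarrow> 'b option) \<Rightarrow> 'a view \<Rightarrow> 'b option" where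
  "delay k \<delta> v = (if k \<le> view_depth v then \<delta> (drop_rounds k (view_depth v - k) v) else None)"

lemma set_heard: "set (filter (\<lambda>q. (q, p) \<in> w r) [0..<Suc n]) = {q \<in> procs n. (q, p) \<in> w r}"
  unfolding procs_def by (auto simp del: upt_Suc)

lemma IIS_self_loop: "w \<in> IIS n \<Longrightarrow> p \<in> procs n \<Longrightarrow> (p, p) \<in> w r"
  unfolding IIS_def ImS_def by blast

lemma self_in_heard:
  assumes "w \<in> IIS n" "p \<in> procs n"
  shows "p \<in> set (filter (\<lambda>q. (q, p) \<in> w r) [0..<Suc n])"
  using assms unfolding set_heard by (simp add: IIS_self_loop)

lemma view_owner_fi_view: "view_owner (fi_view n \<iota> w p r) = p"
  by (cases r) auto

lemma own_input_fi_view: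
  assumes "w \<in> IIS n" "p \<in> procs n" "r \<le> m"
  shows "own_input m (fi_view n \<iota> w p r) = input \<iota> p"
  using assms(2,3)
proof (induction r arbitrary: m)
  case 0
  then show ?case by simp
next
  case (Suc r)
  then obtain m' where "m = Suc m'" "r \<le> m'"
    by (cases m) auto
  moreover have "map_of (map (\<lambda>q. (q, fi_view n \<iota> w q r)) (filter (\<lambda>q. (q, p) \<in> w r) [0..<Suc n])) p
      = Some (fi_view n \<iota> w p r)"
    using self_in_heard[OF assms(1) Suc.prems(1)]
    by (simp only: map_of_map_restrict restrict_in comp_apply)
  ultimately show ?case
    using Suc by (simp del: upt_Suc)
qed

lemma view_depth_fi_view:
  assumes "w \<in> IIS n" "p \<in> procs n"
  shows "view_depth (fi_view n \<iota> w p r) = r"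
  using assms(2)
proof (induction r arbitrary: p)
  case 0
  then show ?case by simp
next
  case (Suc r)
  obtain q l where heard: "filter (\<lambda>q. (q, p) \<in> w r) [0..<Suc n] = q # l"
    using self_in_heard[OF assms(1) Suc.prems] by (metis empty_iff list.set(1) neq_Nil_conv)
  then have "q \<in> set (filter (\<lambda>q. (q, p) \<in> w r) [0..<Suc n])"
    by simp
  then have "q \<in> procs n"
    unfolding set_heard by simp
  with heard Suc.IH show ?case
    by (simp del: upt_Suc)
qed

lemma drop_rounds_fi_view:
  assumes "w \<in> IIS n" "p \<in> procs n"
  shows "drop_rounds k r (fi_view n \<iota> w p (r + k)) = fi_view n \<iota> (\<lambda>i. w (i + k)) p r"
  using assms(2)
proof (induction r arbitrary: p)
  case 0
  then show ?case by (simp add: view_owner_fi_view own_input_fi_view[OF assms(1)])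
next
  case (Suc r)
  then show ?case
    by (auto simp: procs_def intro!: map_cong)
qed

lemma delay_fi_view:
  assumes "w \<in> IIS n" "p \<in> procs n"
  shows "delay k \<delta> (fi_view n \<iota> w p r) =
    (if k \<le> r then \<delta> (fi_view n \<iota> (\<lambda>i. w (i + k)) p (r - k)) else None)"
proof (cases "k \<le> r")
  case True
  then show ?thesis
    using drop_rounds_fi_view[OF assms, of k "r - k" \<iota>]
    by (simp add: delay_def view_depth_fi_view[OF assms])
qed (simp add: delay_def view_depth_fi_view[OF assms])

lemma Least_shift:
  fixes P Q :: "nat \<Rightarrow> bool"
  assumes "\<And>r. r < k \<Longrightarrow> \<not> P r" and "\<And>s. P (s + k) \<longleftrightarrow> Q s" and "\<exists>s. Q s"
  shows "(LEAST r. P r) = (LEAST s. Q s) + k"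
proof (rule Least_equality)
  show "P ((LEAST s. Q s) + k)"
    using assms(2,3) LeastI_ex by blast
next
  fix r
  assume "P r"
  with assms(1) have "k \<le> r"
    by (meson not_le)
  with \<open>P r\<close> assms(2)[of "r - k"] have "(LEAST s. Q s) \<le> r - k"
    by (simp add: Least_le)
  with \<open>k \<le> r\<close> show "(LEAST s. Q s) + k \<le> r"
    by simp
qed

lemma decision_delay:
  assumes "w \<in> IIS n" "p \<in> procs n" "\<exists>s. \<delta> (fi_view n \<iota> (\<lambda>i. w (i + k)) p s) \<noteq> None"
  shows "decision n (delay k \<delta>) \<iota> w p = decision n \<delta> \<iota> (\<lambda>i. w (i + k)) p"
proof -
  have "(LEAST r. delay k \<delta> (fi_view n \<iota> w p r) \<noteq> None) =
      (LEAST s. \<delta> (fi_view n \<iota> (\<lambda>i. w (i + k)) p s) \<noteq> None) + k"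
    by (rule Least_shift) (use assms in \<open>auto simp: delay_fi_view\<close>)
  then show ?thesis
    by (simp add: decision_def delay_fi_view[OF assms(1,2)])
qed

lemma INFM_nat_shift: "(\<exists>\<^sub>\<infinity>i. Q (i + k)) \<longleftrightarrow> (\<exists>\<^sub>\<infinity>i::nat. Q i)"
  using eventually_sequentially_seg[of "\<lambda>i. \<not> Q i" k]
  by (simp add: frequently_def cofinite_eq_sequentially)

lemma Qset_shift: "Qset n (\<lambda>i. w (i + k)) = Qset n w"
  unfolding Qset_def by (simp add: INFM_nat_shift[of "\<lambda>r. _ \<in> w r"])

lemma IIS_shift: "w \<in> IIS n \<Longrightarrow> (\<lambda>i. w (i + k)) \<in> IIS n"
  unfolding IIS_def by simp

lemma adversary_k_mono: "j \<le> k \<Longrightarrow> adversary_k n C P j \<subseteq> adversary_k n C P k"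
  unfolding adversary_k_def by auto

lemma adversary_k_shift:
  assumes "(\<iota>, w) \<in> adversary_k n C P (j + k)"
  shows "(\<iota>, \<lambda>i. w (i + k)) \<in> adversary_k n C P j"
proof -
  have silent: "\<forall>p\<in>procs n - Qset n w. \<forall>q\<in>Qset n w. \<forall>r. j + k < r \<longrightarrow> (p, q) \<notin> w (r - 1)"
    using assms unfolding adversary_k_def by simp
  have "(p, q) \<notin> w (r - 1 + k)"
    if "p \<in> procs n - Qset n w" "q \<in> Qset n w" "j < r" for p q r
    using silent[rule_format, OF that(1,2), of "r + k"] that(3) by simp
  with assms show ?thesis
    unfolding adversary_k_def adversary_def by (simp add: Qset_shift IIS_shift)
qed

lemma solvable_antimono: "A \<subseteq> B \<Longrightarrow> solvable n \<Delta> B \<Longrightarrow> solvable n \<Delta> A"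
  unfolding solvable_def by (meson subsetD)

lemma solvable_if_suffixes_solvable:
  assumes "solvable n \<Delta> B"
    and "\<And>\<iota> w. (\<iota>, w) \<in> A \<Longrightarrow> (\<iota>, \<lambda>i. w (i + k)) \<in> B"
    and "\<And>\<iota> w. (\<iota>, w) \<in> A \<Longrightarrow> w \<in> IIS n \<and> fst ` \<iota> \<subseteq> procs n"
  shows "solvable n \<Delta> A"
proof -
  obtain \<delta> :: "'a view \<Rightarrow> 'b option" where \<delta>: "\<forall>(\<iota>, w)\<in>B.
      (\<forall>p\<in>fst ` \<iota>. \<exists>r. \<delta> (fi_view n \<iota> w p r) \<noteq> None) \<and>
      decision n \<delta> \<iota> w ` fst ` \<iota> \<in> \<Delta> (GIV \<iota>)"
    using assms(1) unfolding solvable_def by blast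
  have delay_solves: "(\<forall>p\<in>fst ` \<iota>. \<exists>r. delay k \<delta> (fi_view n \<iota> w p r) \<noteq> None) \<and>
      decision n (delay k \<delta>) \<iota> w ` fst ` \<iota> \<in> \<Delta> (GIV \<iota>)" if "(\<iota>, w) \<in> A" for \<iota> w
  proof -
    have w: "w \<in> IIS n" and procs: "fst ` \<iota> \<subseteq> procs n"
      using assms(3)[OF that] by auto
    have decides: "\<forall>p\<in>fst ` \<iota>. \<exists>s. \<delta> (fi_view n \<iota> (\<lambda>i. w (i + k)) p s) \<noteq> None"
      and correct: "decision n \<delta> \<iota> (\<lambda>i. w (i + k)) ` fst ` \<iota> \<in> \<Delta> (GIV \<iota>)"
      using \<delta> assms(2)[OF that] by auto
    have "\<exists>r. delay k \<delta> (fi_view n \<iota> w p r) \<noteq> None" if p: "p \<in> fst ` \<iota>" for p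
    proof -
      obtain s where "\<delta> (fi_view n \<iota> (\<lambda>i. w (i + k)) p s) \<noteq> None"
        using decides p by blast
      moreover have "p \<in> procs n"
        using procs p by blast
      ultimately have "delay k \<delta> (fi_view n \<iota> w p (s + k)) \<noteq> None"
        by (simp add: delay_fi_view[OF w])
      then show ?thesis ..
    qed
    moreover have "decision n (delay k \<delta>) \<iota> w ` fst ` \<iota> = decision n \<delta> \<iota> (\<lambda>i. w (i + k)) ` fst ` \<iota>"
    proof (rule image_cong[OF refl])
      fix p
      assume "p \<in> fst ` \<iota>"
      with decides procs show "decision n (delay k \<delta>) \<iota> w p = decision n \<delta> \<iota> (\<lambda>i. w (i + k)) p"
        by (intro decision_delay[OF w]) auto
    qed
    ultimately show ?thesis
      using correct by simp
  qed
  show ?thesis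
    unfolding solvable_def by (intro exI[of _ "delay k \<delta>"] ballI) (clarify, erule delay_solves)
qed

theorem mainTheorem6:
  fixes n :: nat
    and I :: "'a set set" and Out :: "'b set set" and \<Delta> :: "'a set \<Rightarrow> 'b set set"
    and C :: "(nat \<times> 'a) set set" and P :: "(nat \<times> 'a) set \<Rightarrow> nat set set"
  assumes "colorless_task I Out \<Delta>"
    and "C \<subseteq> Pn n I"
    and "core_dependent n C P"
  shows "\<forall>k::nat. solvable n \<Delta> (adversary_k n C P k) \<longleftrightarrow> solvable n \<Delta> (adversary_k n C P 0)"
proof (intro allI iffI)
  fix k
  assume "solvable n \<Delta> (adversary_k n C P k)"
  then show "solvable n \<Delta> (adversary_k n C P 0)"
    by (rule solvable_antimono[OF adversary_k_mono[OF le0]])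
next
  fix k
  assume "solvable n \<Delta> (adversary_k n C P 0)"
  then show "solvable n \<Delta> (adversary_k n C P k)"
  proof (rule solvable_if_suffixes_solvable)
    fix \<iota> w
    assume H\<^sub>k: "(\<iota>, w) \<in> adversary_k n C P k"
    then show "(\<iota>, \<lambda>i. w (i + k)) \<in> adversary_k n C P 0"
      using adversary_k_shift[of \<iota> w n C P 0 k] by simp
    show "w \<in> IIS n \<and> fst ` \<iota> \<subseteq> procs n"
      using H\<^sub>k assms(2) unfolding adversary_k_def adversary_def Pn_def by auto
  qed
qed

end
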